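(* Let $G$ be a finite simple graph with edge weight function $w$ and vertex weight function $w_1$. Then (a) the multiplicity of any root of $\eta_{(w,w_1)}(G,x)$ is at most the number of paths in any family of vertex-disjoint paths (single vertices allowed) covering all vertices of $G$; (b) the number of distinct roots of $\eta_{(w,w_1)}(G,x)$ is at least the number of vertices of a longest path in $G$.
   Context: An edge weight function $w$ assigns a nonzero complex number to each edge; a vertex weight function $w_1$ assigns a real number (possibly $0$) to each vertex; induced subgraphs carry restricted weights. For $A\subseteq E(G)$, $w(A)=\prod_{e\in A}w(e)$. $\mu_w(G,x)=\sum_{M}(-1)^{|M|}|w(M)|^2x^{n-2|M|}$ over all matchings $M$ (including empty), $n=|V(G)|$. $\eta_{(w,w_1)}(G,x)=\sum_{S\subseteq V(G)}(-1)^{|V(G)\setminus S|}\big(\prod_{y\in V(G)\setminus S}w_1(y)\big)\mu_w(G[S],x)$ with $G[S]$ the induced subgraph and $\mu_w$ of the empty graph equal to $1$. *)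

theory Defs
  imports Complex_Main "HOL-Computational_Algebra.Polynomial"
begin

definition simple_graph :: "'a set \<Rightarrow> 'a set set \<Rightarrow> bool" where
  "simple_graph V E \<longleftrightarrow> finite V \<and> (\<forall>e\<in>E. e \<subseteq> V \<and> card e = 2)"

definition induced_edges :: "'a set set \<Rightarrow> 'a set \<Rightarrow> 'a set set" where
  "induced_edges E S = {e\<in>E. e \<subseteq> S}"

definition matchings :: "'a set set \<Rightarrow> 'a set set set" where
  "matchings E = {M. M \<subseteq> E \<and> (\<forall>e\<in>M. \<forall>f\<in>M. e \<noteq> f \<longrightarrow> e \<inter> f = {})}"

definition mu_w :: "'a set set \<Rightarrow> ('a set \<Rightarrow> complex) \<Rightarrow> 'a set \<Rightarrow> real poly" where
  "mu_w E w S = (\<Sum>M\<in>matchings (induced_edges E S).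
      monom ((-1) ^ card M * (cmod (\<Prod>e\<in>M. w e))\<^sup>2) (card S - 2 * card M))"

definition eta_w :: "'a set \<Rightarrow> 'a set set \<Rightarrow> ('a set \<Rightarrow> complex) \<Rightarrow> ('a \<Rightarrow> real) \<Rightarrow> real poly" where
  "eta_w V E w w1 = (\<Sum>S\<in>Pow V.
      smult ((-1) ^ card (V - S) * (\<Prod>y\<in>V - S. w1 y)) (mu_w E w S))"

definition is_path :: "'a set \<Rightarrow> 'a set set \<Rightarrow> 'a list \<Rightarrow> bool" where
  "is_path V E p \<longleftrightarrow> p \<noteq> [] \<and> distinct p \<and> set p \<subseteq> V \<and>
     (\<forall>i. Suc i < length p \<longrightarrow> {p ! i, p ! Suc i} \<in> E)"

definition path_cover :: "'a set \<Rightarrow> 'a set set \<Rightarrow> 'a list set \<Rightarrow> bool" where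
  "path_cover V E P \<longleftrightarrow> finite P \<and> (\<forall>p\<in>P. is_path V E p) \<and>
     (\<forall>p\<in>P. \<forall>q\<in>P. p \<noteq> q \<longrightarrow> set p \<inter> set q = {}) \<and>
     (\<Union>p\<in>P. set p) = V"

end

theory Submission
  imports Defs "HOL-Computational_Algebra.Fundamental_Theorem_Algebra"
begin

text \<open>
  Expanding the vertex weights, \<open>\<eta>(G)\<close> is the sum over all matchings \<open>M\<close> of
  \<open>(-1)^|M| |w(M)|^2 \<Prod>(x - w\<^sub>1 y)\<close>, the product ranging over the vertices \<open>y\<close> not
  covered by \<open>M\<close>. Splitting the matchings at a vertex \<open>u\<close> gives the recurrence
  \<open>\<eta>(G) = (x - w\<^sub>1 u) \<eta>(G - u) - \<Sum>\<^sub>v |w(uv)|^2 \<eta>(G - u - v)\<close> over the neighbours \<open>v\<close> of \<open>u\<close>.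
  Hence \<open>\<eta>(G)\<close> is monic of degree \<open>|V|\<close>, and \<open>\<eta>(G)/\<eta>(G - u)\<close> maps the upper half plane
  into itself, so all roots are real. The same recurrence turns the Wronskian
  \<open>W\<^sub>u(G) = \<eta>(G - u) \<eta>(G)' - \<eta>(G) \<eta>(G - u)'\<close> into
  \<open>W\<^sub>u(G) = \<eta>(G - u)^2 + \<Sum>\<^sub>v |w(uv)|^2 W\<^sub>v(G - u)\<close>; unfolding this along a path \<open>P\<close>
  starting at \<open>u\<close> bounds \<open>W\<^sub>u(G)\<close> from below both by \<open>\<eta>(G - u)^2\<close> and by \<open>c \<eta>(G - P)^2\<close>
  with \<open>c > 0\<close>. As a root \<open>\<theta>\<close> of multiplicities \<open>m\<close> in \<open>\<eta>(G)\<close> and \<open>k\<close> in \<open>\<eta>(G - u)\<close> has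
  multiplicity at least \<open>m + k - 1\<close> in \<open>W\<^sub>u(G)\<close>, this yields
  \<open>mult\<^sub>\<theta> \<eta>(G) \<le> mult\<^sub>\<theta> \<eta>(G - P) + 1\<close>. Part (a) follows by removing the paths of a cover
  one at a time; for (b), summing this over the roots of \<open>\<eta>(G)\<close> gives
  \<open>|V| \<le> (|V| - |P|) + #roots\<close>.
\<close>

lemma smult_sum_right: "smult c (\<Sum>i\<in>A. f i) = (\<Sum>i\<in>A. smult c (f i))"
  by (induction A rule: infinite_finite_induct) (auto simp: smult_add_right)

lemma pderiv_sum: "pderiv (\<Sum>i\<in>A. f i) = (\<Sum>i\<in>A. pderiv (f i))"
  by (induction A rule: infinite_finite_induct) (auto simp: pderiv_add)

lemma degree_lead_coeff_linear_mult_diff: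
  fixes p q :: "'a :: idom poly"
  assumes "degree p = n" "lead_coeff p = 1" "degree q \<le> n"
  shows "degree ([:a, 1:] * p - q) = Suc n" and "lead_coeff ([:a, 1:] * p - q) = 1"
proof -
  have "p \<noteq> 0"
    using assms(2) by auto
  then have deg: "degree ([:a, 1:] * p) = Suc n"
    using assms(1) by (simp add: degree_mult_eq del: mult_pCons_left)
  have lead: "lead_coeff ([:a, 1:] * p) = 1"
    unfolding lead_coeff_mult using assms(2) by simp
  have lt: "degree (- q) < degree ([:a, 1:] * p)"
    using assms(3) deg by (simp del: mult_pCons_left)
  show "degree ([:a, 1:] * p - q) = Suc n"
    using degree_add_eq_left[OF lt] deg by simp
  show "lead_coeff ([:a, 1:] * p - q) = 1"
    using lead_coeff_add_le[OF lt] degree_add_eq_left[OF lt] lead by (simp add: add.commute)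
qed

lemma sum_supersets_expansion:
  fixes a :: "'a \<Rightarrow> 'b :: comm_ring_1"
  assumes "finite U" "C \<subseteq> U"
  shows "(\<Sum>S\<in>{S\<in>Pow U. C \<subseteq> S}.
            smult ((-1) ^ card (U - S) * (\<Prod>y\<in>U - S. a y)) (monom c (card S - card C)))
       = smult c (\<Prod>y\<in>U - C. [:- a y, 1:])"
proof -
  let ?T = "U - C"
  let ?f = "\<lambda>S. smult ((-1) ^ card (U - S) * (\<Prod>y\<in>U - S. a y)) (monom c (card S - card C))"
  let ?g = "\<lambda>X. smult ((-1) ^ card (?T - X) * (\<Prod>y\<in>?T - X. a y)) (monom c (card X))"
  have fin: "finite ?T" "finite C"
    using assms finite_subset by auto
  have "{S\<in>Pow U. C \<subseteq> S} = (\<union>) C ` Pow ?T"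
    using assms(2) by (auto intro!: image_eqI[where x = "_ - C"])
  moreover have "inj_on ((\<union>) C) (Pow ?T)"
    by (rule inj_onI) blast
  moreover have "?f (C \<union> X) = ?g X" if "X \<subseteq> ?T" for X
  proof -
    have "finite X" "C \<inter> X = {}"
      using that fin(1) finite_subset by blast+
    then have "card (C \<union> X) - card C = card X"
      using fin(2) by (simp add: card_Un_disjoint)
    moreover have "U - (C \<union> X) = ?T - X"
      by blast
    ultimately show ?thesis
      by simp
  qed
  ultimately have "(\<Sum>S\<in>{S\<in>Pow U. C \<subseteq> S}. ?f S) = (\<Sum>X\<in>Pow ?T. ?g X)"
    by (simp add: sum.reindex)
  also have "\<dots> = smult c (\<Sum>X\<in>Pow ?T. (\<Prod>y\<in>X. [:0, 1:]) * (\<Prod>y\<in>?T - X. [:- a y:]))"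
    by (simp add: smult_sum_right monom_altdef prod_to_poly prod_uminus mult.commute)
  also have "\<dots> = smult c (\<Prod>y\<in>?T. [:0, 1:] + [:- a y:])"
    by (simp only: prod_add[OF fin(1)])
  finally show ?thesis
    by simp
qed

lemma dvd_pderiv_power:
  fixes p q :: "'a :: {comm_semiring_1, semiring_no_zero_divisors} poly"
  assumes "q ^ m dvd p"
  shows "q ^ (m - 1) dvd pderiv p"
proof (cases m)
  case (Suc n)
  then obtain r where p: "p = q ^ Suc n * r"
    using assms by (auto elim: dvdE)
  have "pderiv p = q ^ Suc n * pderiv r + r * (smult (of_nat (Suc n)) (q ^ n) * pderiv q)"
    unfolding p pderiv_mult pderiv_power_Suc ..
  also have "\<dots> = q ^ n * (q * pderiv r + smult (of_nat (Suc n)) (r * pderiv q))"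
    by (simp add: algebra_simps)
  finally show ?thesis
    using Suc by simp
qed simp

lemma root_power_dvd_wronskian:
  fixes p q :: "'a :: idom poly"
  shows "[:-t, 1:] ^ (order t p + order t q - 1) dvd q * pderiv p - p * pderiv q"
proof -
  let ?l = "[:-t, 1:]" and ?m = "order t p" and ?k = "order t q"
  have "?l ^ (?k + (?m - 1)) dvd q * pderiv p"
    unfolding power_add by (intro mult_dvd_mono order_1 dvd_pderiv_power)
  moreover have "?l ^ (?m + (?k - 1)) dvd p * pderiv q"
    unfolding power_add by (intro mult_dvd_mono order_1 dvd_pderiv_power)
  ultimately show ?thesis
    by (intro dvd_diff) (erule dvd_trans[rotated], rule le_imp_power_dvd, linarith)+
qed

lemma poly_nonneg_by_continuity:
  fixes h :: "real poly"
  assumes "\<And>x. x \<noteq> t \<Longrightarrow> poly h x \<ge> 0"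
  shows "poly h t \<ge> 0"
proof -
  have "(poly h \<longlongrightarrow> poly h t) (at t)"
    using poly_isCont isCont_def by blast
  then show ?thesis
    by (rule tendsto_lowerbound)
      (auto intro: eventually_mono[OF eventually_neq_at_within[of t t UNIV]] assms)
qed

lemma poly_nonzero_if_square_bound:
  fixes f g :: "real poly"
  assumes "c > 0" "g \<noteq> 0" "\<And>x. c * (poly g x)\<^sup>2 \<le> poly f x"
  shows "f \<noteq> 0"
proof -
  obtain x where "poly g x \<noteq> 0"
    using poly_roots_finite[OF assms(2)] ex_new_if_finite[OF infinite_UNIV_char_0] by blast
  then have "poly f x > 0"
    using assms(1) assms(3)[of x] by (smt (verit) mult_pos_pos zero_less_power2)
  then show ?thesis
    by auto
qed

lemma order_le_double_order_if_square_bound: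
  fixes f g :: "real poly"
  assumes c: "c > 0" and g: "g \<noteq> 0" and bound: "\<And>x. c * (poly g x)\<^sup>2 \<le> poly f x"
  shows "order t f \<le> 2 * order t g"
proof (rule ccontr)
  assume not_le: "\<not> order t f \<le> 2 * order t g"
  define n where "n = order t g"
  obtain g1 where g1: "g = [:-t, 1:] ^ n * g1" "\<not> [:-t, 1:] dvd g1"
    using order_decomp[OF g] n_def by blast
  have "[:-t, 1:] ^ (2 * n + 1) dvd f"
    unfolding order_divides using not_le by (simp add: n_def)
  then obtain f1 where f1: "f = [:-t, 1:] ^ (2 * n + 1) * f1"
    by (auto elim: dvdE)
  define h where "h = [:-t, 1:] * f1 - smult c (g1\<^sup>2)"
  \<comment> \<open>Dividing the bound by \<open>(x - t)^(2n)\<close> gives \<open>h \<ge> 0\<close> off \<open>t\<close>, but \<open>h(t) < 0\<close>.\<close>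
  have "poly h x \<ge> 0" if "x \<noteq> t" for x
  proof -
    have pos: "(x - t) ^ (2 * n) > 0"
      using that by (simp add: power_mult zero_less_power2)
    have "(x - t) ^ (2 * n) * (c * (poly g1 x)\<^sup>2) \<le> (x - t) ^ (2 * n) * ((x - t) * poly f1 x)"
      using bound[of x] unfolding f1 g1(1)
      by (simp add: power_mult_distrib power_mult power_add algebra_simps)
    then have "c * (poly g1 x)\<^sup>2 \<le> (x - t) * poly f1 x"
      using pos by (simp add: mult_le_cancel_left)
    then show ?thesis
      by (simp add: h_def algebra_simps)
  qed
  then have "poly h t \<ge> 0"
    by (rule poly_nonneg_by_continuity)
  moreover have "poly g1 t \<noteq> 0"
    using g1(2) by (simp add: poly_eq_0_iff_dvd)
  then have "poly h t < 0"
    using c by (simp add: h_def)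
  ultimately show False
    by simp
qed

lemma sum_order_le_degree:
  fixes p :: "'a :: idom poly"
  assumes "finite A" "p \<noteq> 0"
  shows "(\<Sum>x\<in>A. order x p) \<le> degree p"
proof -
  have "(\<Sum>x\<in>A. order x p) = (\<Sum>x\<in>A. count (proots p) x)"
    using assms(2) by simp
  also have "\<dots> = (\<Sum>x\<in>A \<inter> set_mset (proots p). count (proots p) x)"
    using assms(1) by (intro sum.mono_neutral_right) (auto simp: count_eq_zero_iff)
  also have "\<dots> \<le> (\<Sum>x\<in>set_mset (proots p). count (proots p) x)"
    by (intro sum_mono2) auto
  also have "\<dots> = size (proots p)"
    by (simp add: size_multiset_overloaded_eq)
  also have "\<dots> \<le> degree p"
    by (rule size_proots_le)
  finally show ?thesis .
qed

abbreviation complex_poly :: "real poly \<Rightarrow> complex poly" where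
  "complex_poly \<equiv> map_poly complex_of_real"

lemma complex_poly_add: "complex_poly (p + q) = complex_poly p + complex_poly q"
  by (rule poly_eqI) (simp add: coeff_map_poly)

lemma complex_poly_diff: "complex_poly (p - q) = complex_poly p - complex_poly q"
  by (rule poly_eqI) (simp add: coeff_map_poly)

lemma complex_poly_mult: "complex_poly (p * q) = complex_poly p * complex_poly q"
  by (rule poly_eqI) (simp add: coeff_map_poly coeff_mult)

lemma complex_poly_sum: "complex_poly (\<Sum>i\<in>A. f i) = (\<Sum>i\<in>A. complex_poly (f i))"
  by (induction A rule: infinite_finite_induct) (auto simp: complex_poly_add)

lemma poly_complex_poly_of_real: "poly (complex_poly p) (of_real x) = of_real (poly p x)"
  by (induction p) (auto simp: map_poly_pCons)

lemma degree_complex_poly: "degree (complex_poly p) = degree p"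
  by (rule degree_map_poly) auto

lemma size_proots_eq_degree_if_real_roots:
  fixes p :: "real poly"
  assumes "\<And>z. poly (complex_poly p) z = 0 \<Longrightarrow> Im z = 0"
  shows "size (proots p) = degree p"
  using assms
proof (induction "degree p" arbitrary: p)
  case 0
  then show ?case
    by (metis degree_0_id proots_const size_empty)
next
  case (Suc n)
  then have "\<not> constant (poly (complex_poly p))"
    by (simp add: constant_degree degree_complex_poly)
  then obtain z where z: "poly (complex_poly p) z = 0"
    using fundamental_theorem_of_algebra by blast
  then have "z = of_real (Re z)"
    using Suc.prems by (simp add: complex_eq_iff)
  then have "poly p (Re z) = 0"
    using z by (metis of_real_eq_0_iff poly_complex_poly_of_real)
  then obtain r where p: "p = [:- Re z, 1:] * r"
    by (auto simp: poly_eq_0_iff_dvd elim: dvdE)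
  moreover have "p \<noteq> 0"
    using Suc.hyps(2) by auto
  ultimately have "r \<noteq> 0"
    by auto
  have "degree p = degree [:- Re z, 1:] + degree r"
    unfolding p by (rule degree_mult_eq) (use \<open>r \<noteq> 0\<close> in auto)
  then have "degree r = n"
    using Suc.hyps(2) by simp
  moreover have "Im z' = 0" if "poly (complex_poly r) z' = 0" for z'
  proof (rule Suc.prems)
    show "poly (complex_poly p) z' = 0"
      unfolding p complex_poly_mult poly_mult using that by simp
  qed
  ultimately have "size (proots r) = n"
    using Suc.hyps(1) \<open>degree r = n\<close> by blast
  moreover have "proots p = proots [:- Re z, 1:] + proots r"
    unfolding p by (rule proots_mult) (use \<open>r \<noteq> 0\<close> in auto)
  ultimately show ?case
    using Suc.hyps(2) by simp
qed

lemma degree_eq_sum_order_if_real_roots: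
  fixes p :: "real poly"
  assumes "p \<noteq> 0" "\<And>z. poly (complex_poly p) z = 0 \<Longrightarrow> Im z = 0"
  shows "degree p = (\<Sum>x\<in>{x. poly p x = 0}. order x p)"
  using size_proots_eq_degree_if_real_roots[of p] assms
  by (simp add: size_multiset_overloaded_eq)

lemma Im_inverse_neg: "Im a > 0 \<Longrightarrow> Im (inverse a) < 0"
  by (auto simp: Im_inverse intro!: divide_pos_pos add_nonneg_pos)

section \<open>Matchings and paths\<close>

lemma finite_induced_edges: "finite S \<Longrightarrow> finite (induced_edges E S)"
  by (rule finite_subset[of _ "Pow S"]) (auto simp: induced_edges_def)

lemma finite_matchings: "finite S \<Longrightarrow> finite (matchings (induced_edges E S))"
  by (rule finite_subset[of _ "Pow (induced_edges E S)"])
     (auto simp: matchings_def finite_induced_edges)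

lemma finite_matching: "finite S \<Longrightarrow> M \<in> matchings (induced_edges E S) \<Longrightarrow> finite M"
  by (auto simp: matchings_def intro: finite_subset[OF _ finite_induced_edges])

lemma matchings_induced_edges_mono:
  "S \<subseteq> U \<Longrightarrow> matchings (induced_edges E S) = {M \<in> matchings (induced_edges E U). \<Union>M \<subseteq> S}"
  by (auto simp: matchings_def induced_edges_def)

lemma card_Union_matching:
  assumes "\<forall>e\<in>E. card e = 2" "finite S" "M \<in> matchings (induced_edges E S)"
  shows "card (\<Union>M) = 2 * card M"
proof -
  have "card (\<Union>M) = sum card M"
    using assms finite_matching[OF assms(2,3)]
    by (intro card_Union_disjoint)
       (auto simp: matchings_def induced_edges_def pairwise_def disjnt_def intro: finite_subset)
  also have "\<dots> = 2 * card M"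
    using assms by (simp add: matchings_def induced_edges_def subset_iff)
  finally show ?thesis .
qed

lemma matchings_split:
  assumes "\<forall>e\<in>E. card e = 2" and "u \<in> S"
  shows "matchings (induced_edges E S) = matchings (induced_edges E (S - {u})) \<union>
    (\<Union>v\<in>{v\<in>S - {u}. {u,v} \<in> E}. insert {u,v} ` matchings (induced_edges E (S - {u} - {v})))"
    (is "?M = ?A \<union> ?B")
proof
  show "?A \<union> ?B \<subseteq> ?M"
    using assms(2) by (auto simp: matchings_def induced_edges_def)
  show "?M \<subseteq> ?A \<union> ?B"
  proof
    fix M assume M: "M \<in> ?M"
    show "M \<in> ?A \<union> ?B"
    proof (cases "u \<in> \<Union>M")
      case False
      then show ?thesis using M by (auto simp: matchings_def induced_edges_def)
    next
      case True
      then obtain e where e: "e \<in> M" "u \<in> e" by blast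
      with M assms(1) have "e \<in> E" "e \<subseteq> S" "card e = 2"
        by (auto simp: matchings_def induced_edges_def)
      then obtain v where v: "e = {u,v}" "v \<noteq> u"
        using e(2) by (auto simp: card_2_iff doubleton_eq_iff)
      have "f \<inter> e = {}" if "f \<in> M - {e}" for f
        using M e that by (auto simp: matchings_def)
      then have "M - {e} \<in> matchings (induced_edges E (S - {u} - {v}))"
        using M v by (auto simp: matchings_def induced_edges_def)
      moreover have "M = insert {u,v} (M - {e})"
        using e v by auto
      ultimately have "M \<in> insert {u,v} ` matchings (induced_edges E (S - {u} - {v}))"
        by (rule rev_image_eqI)
      moreover have "v \<in> S - {u}" "{u,v} \<in> E"
        using \<open>e \<in> E\<close> \<open>e \<subseteq> S\<close> v by auto
      ultimately show ?thesis
        by blast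
    qed
  qed
qed

lemma insert_edge_matchings_disjoint:
  assumes "v \<noteq> v'"
  shows "insert {u,v} ` matchings (induced_edges E (S - {u} - {v}))
       \<inter> insert {u,v'} ` matchings (induced_edges E (S - {u} - {v'})) = {}"
proof (rule ccontr)
  assume "\<not> ?thesis"
  then obtain M M' where "insert {u,v} M = insert {u,v'} M'"
    and M': "M' \<in> matchings (induced_edges E (S - {u} - {v'}))"
    by blast
  moreover have "{u,v} \<noteq> {u,v'}"
    using assms by (auto simp: doubleton_eq_iff)
  ultimately have "{u,v} \<in> M'"
    by (metis insertE insertI1)
  with M' show False
    by (auto simp: matchings_def induced_edges_def)
qed

lemma sum_matchings_split:
  assumes "\<forall>e\<in>E. card e = 2" "finite S" "u \<in> S"
  shows "(\<Sum>M\<in>matchings (induced_edges E S). f M) =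
    (\<Sum>M\<in>matchings (induced_edges E (S - {u})). f M) +
    (\<Sum>v\<in>{v\<in>S - {u}. {u,v} \<in> E}.
       \<Sum>M\<in>matchings (induced_edges E (S - {u} - {v})). f (insert {u,v} M))"
proof -
  let ?N = "{v\<in>S - {u}. {u,v} \<in> E}"
  let ?B = "\<lambda>v. insert {u,v} ` matchings (induced_edges E (S - {u} - {v}))"
  have "(\<Sum>M\<in>matchings (induced_edges E S). f M) =
      (\<Sum>M\<in>matchings (induced_edges E (S - {u})). f M) + (\<Sum>M\<in>(\<Union>v\<in>?N. ?B v). f M)"
    unfolding matchings_split[OF assms(1,3)] using assms(2)
    by (intro sum.union_disjoint)
       (auto simp: finite_matchings matchings_def induced_edges_def)
  also have "(\<Sum>M\<in>(\<Union>v\<in>?N. ?B v). f M) = (\<Sum>v\<in>?N. \<Sum>M\<in>?B v. f M)"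
  proof (rule sum.UNION_disjoint)
    show "\<forall>v\<in>?N. \<forall>v'\<in>?N. v \<noteq> v' \<longrightarrow> ?B v \<inter> ?B v' = {}"
      by (intro ballI impI insert_edge_matchings_disjoint)
  qed (use assms(2) in \<open>auto simp: finite_matchings\<close>)
  also have "(\<Sum>v\<in>?N. \<Sum>M\<in>?B v. f M) =
      (\<Sum>v\<in>?N. \<Sum>M\<in>matchings (induced_edges E (S - {u} - {v})). f (insert {u,v} M))"
  proof (rule sum.cong[OF refl])
    fix v
    have "{u,v} \<notin> M" if "M \<in> matchings (induced_edges E (S - {u} - {v}))" for M
      using that by (auto simp: matchings_def induced_edges_def)
    then have "inj_on (insert {u,v}) (matchings (induced_edges E (S - {u} - {v})))"
      by (intro inj_onI) (metis insert_ident)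
    then show "(\<Sum>M\<in>?B v. f M)
        = (\<Sum>M\<in>matchings (induced_edges E (S - {u} - {v})). f (insert {u,v} M))"
      by (simp add: sum.reindex)
  qed
  finally show ?thesis .
qed

lemma is_path_Cons_Cons:
  "is_path U E (u # v # p) \<longleftrightarrow>
     u \<in> U \<and> u \<notin> set (v # p) \<and> {u,v} \<in> E \<and> is_path (U - {u}) E (v # p)"
proof -
  have "(\<forall>i. Suc i < length (u # v # p) \<longrightarrow> {(u # v # p) ! i, (u # v # p) ! Suc i} \<in> E) \<longleftrightarrow>
      {u,v} \<in> E \<and> (\<forall>i. Suc i < length (v # p) \<longrightarrow> {(v # p) ! i, (v # p) ! Suc i} \<in> E)"
    by (metis (no_types, lifting) Suc_less_eq length_Cons nat.exhaust nth_Cons_0 nth_Cons_Suc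
        zero_less_Suc)
  then show ?thesis
    by (auto simp: is_path_def)
qed

lemma is_path_mono: "is_path U E p \<Longrightarrow> set p \<subseteq> U' \<Longrightarrow> is_path U' E p"
  by (simp add: is_path_def)

section \<open>The vertex-deletion recurrence\<close>

locale graph_weights =
  fixes E :: "'a set set" and w :: "'a set \<Rightarrow> complex" and w1 :: "'a \<Rightarrow> real"
  assumes card_edge: "\<forall>e\<in>E. card e = 2"
begin

abbreviation eta :: "'a set \<Rightarrow> real poly" where
  "eta U \<equiv> eta_w U E w w1"

definition matching_weight :: "'a set set \<Rightarrow> real" where
  "matching_weight M = (-1) ^ card M * (cmod (\<Prod>e\<in>M. w e))\<^sup>2"

definition matching_term :: "'a set \<Rightarrow> 'a set set \<Rightarrow> real poly" where
  "matching_term U M = smult (matching_weight M) (\<Prod>y\<in>U - \<Union>M. [:- w1 y, 1:])"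

definition edge_weight :: "'a \<Rightarrow> 'a \<Rightarrow> real" where
  "edge_weight u v = (cmod (w {u,v}))\<^sup>2"

definition neighbours :: "'a set \<Rightarrow> 'a \<Rightarrow> 'a set" where
  "neighbours U u = {v\<in>U - {u}. {u,v} \<in> E}"

lemma edge_weight_nonneg: "edge_weight u v \<ge> 0"
  by (simp add: edge_weight_def)

lemma finite_neighbours: "finite U \<Longrightarrow> finite (neighbours U u)"
  by (simp add: neighbours_def)

lemma eta_matching_expansion:
  assumes "finite U"
  shows "eta U = (\<Sum>M\<in>matchings (induced_edges E U). matching_term U M)"
proof -
  let ?s = "\<lambda>S. (-1) ^ card (U - S) * (\<Prod>y\<in>U - S. w1 y)"
  let ?t = "\<lambda>S M. smult (?s S) (monom (matching_weight M) (card S - card (\<Union>M)))"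
  have "eta U = (\<Sum>S\<in>Pow U. \<Sum>M\<in>{M\<in>matchings (induced_edges E U). \<Union>M \<subseteq> S}. ?t S M)"
  proof (unfold eta_w_def mu_w_def, intro sum.cong refl)
    fix S assume S: "S \<in> Pow U"
    then have "finite S"
      using assms finite_subset by blast
    with S show "smult (?s S) (\<Sum>M\<in>matchings (induced_edges E S).
        monom ((-1) ^ card M * (cmod (\<Prod>e\<in>M. w e))\<^sup>2) (card S - 2 * card M))
      = (\<Sum>M\<in>{M\<in>matchings (induced_edges E U). \<Union>M \<subseteq> S}. ?t S M)"
      by (auto simp: smult_sum_right matching_weight_def card_Union_matching[OF card_edge]
          simp flip: matchings_induced_edges_mono intro!: sum.cong)
  qed
  also have "\<dots> = (\<Sum>M\<in>matchings (induced_edges E U). \<Sum>S\<in>{S\<in>Pow U. \<Union>M \<subseteq> S}. ?t S M)"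
    using assms by (intro sum.swap_restrict) (auto simp: finite_matchings)
  also have "\<dots> = (\<Sum>M\<in>matchings (induced_edges E U). matching_term U M)"
    unfolding matching_term_def using assms by (intro sum.cong refl sum_supersets_expansion)
      (auto simp: matchings_def induced_edges_def)
  finally show ?thesis .
qed

lemma matching_term_remove_vertex:
  assumes "finite U" "u \<in> U" "u \<notin> \<Union>M"
  shows "matching_term U M = [:- w1 u, 1:] * matching_term (U - {u}) M"
proof -
  have "U - \<Union>M = insert u (U - {u} - \<Union>M)"
    using assms(2,3) by blast
  then show ?thesis
    using assms(1) by (simp add: matching_term_def)
qed

lemma matching_term_insert_edge:
  assumes "finite M" "{u,v} \<notin> M"
  shows "matching_term U (insert {u,v} M) = - smult (edge_weight u v) (matching_term (U - {u} - {v}) M)"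
proof -
  have "U - \<Union>(insert {u,v} M) = U - {u} - {v} - \<Union>M"
    by auto
  then show ?thesis
    using assms by (simp add: matching_term_def matching_weight_def edge_weight_def norm_mult
        power_mult_distrib mult_ac)
qed

lemma eta_remove_vertex:
  assumes "finite U" "u \<in> U"
  shows "eta U = [:- w1 u, 1:] * eta (U - {u})
           - (\<Sum>v\<in>neighbours U u. smult (edge_weight u v) (eta (U - {u} - {v})))"
proof -
  have "eta U = (\<Sum>M\<in>matchings (induced_edges E (U - {u})). matching_term U M)
      + (\<Sum>v\<in>neighbours U u. \<Sum>M\<in>matchings (induced_edges E (U - {u} - {v})).
           matching_term U (insert {u,v} M))"
    unfolding eta_matching_expansion[OF assms(1)] neighbours_def
    by (rule sum_matchings_split[OF card_edge assms])
  also have "(\<Sum>M\<in>matchings (induced_edges E (U - {u})). matching_term U M)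
      = [:- w1 u, 1:] * eta (U - {u})"
  proof -
    have "matching_term U M = [:- w1 u, 1:] * matching_term (U - {u}) M"
      if "M \<in> matchings (induced_edges E (U - {u}))" for M
      using that assms by (intro matching_term_remove_vertex) (auto simp: matchings_def induced_edges_def)
    then show ?thesis
      using assms(1) by (simp add: eta_matching_expansion sum_distrib_left)
  qed
  also have "(\<Sum>v\<in>neighbours U u. \<Sum>M\<in>matchings (induced_edges E (U - {u} - {v})).
        matching_term U (insert {u,v} M))
      = - (\<Sum>v\<in>neighbours U u. smult (edge_weight u v) (eta (U - {u} - {v})))"
  proof -
    have "matching_term U (insert {u,v} M) = - smult (edge_weight u v) (matching_term (U - {u} - {v}) M)"
      if "M \<in> matchings (induced_edges E (U - {u} - {v}))" for v M
      using that finite_matching[OF _ that] assms(1)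
      by (intro matching_term_insert_edge) (auto simp: matchings_def induced_edges_def)
    then show ?thesis
      using assms(1) by (simp add: eta_matching_expansion smult_sum_right sum_negf)
  qed
  finally show ?thesis
    by simp
qed

lemma eta_empty: "eta {} = 1"
proof -
  have "induced_edges E {} = {}"
    using card_edge by (auto simp: induced_edges_def)
  then have "matchings (induced_edges E {}) = {{}}"
    by (auto simp: matchings_def)
  then show ?thesis
    by (simp add: eta_matching_expansion matching_term_def matching_weight_def)
qed

lemma degree_lead_coeff_eta:
  "finite U \<Longrightarrow> degree (eta U) = card U \<and> lead_coeff (eta U) = 1"
proof (induction "card U" arbitrary: U rule: less_induct)
  case less
  show ?case
  proof (cases "U = {}")
    case True
    then show ?thesis by (simp add: eta_empty)
  next
    case False
    then obtain u where u: "u \<in> U" by auto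
    then obtain n where n: "card U = Suc n" "card (U - {u}) = n"
      using less.prems by (metis card_Diff1_less card_Suc_Diff1)
    have IH: "degree (eta (U - {u})) = n" "lead_coeff (eta (U - {u})) = 1"
      using less.hyps[of "U - {u}"] less.prems n by auto
    have "degree (eta (U - {u} - {v})) \<le> n" if "v \<in> neighbours U u" for v
    proof -
      have "card (U - {u} - {v}) < card U"
        using less.prems u that by (intro psubset_card_mono) (auto simp: neighbours_def)
      moreover have "card (U - {u} - {v}) \<le> n"
        using less.prems n card_Diff1_le[of "U - {u}" v] by simp
      ultimately show ?thesis
        using less.hyps[of "U - {u} - {v}"] less.prems by auto
    qed
    then have "degree (\<Sum>v\<in>neighbours U u. smult (edge_weight u v) (eta (U - {u} - {v}))) \<le> n"
      using less.prems
      by (intro degree_sum_le) (auto simp: finite_neighbours intro: order_trans[OF degree_smult_le])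
    then show ?thesis
      unfolding eta_remove_vertex[OF less.prems u] n(1)
      using degree_lead_coeff_linear_mult_diff[OF IH] by blast
  qed
qed

lemma degree_eta: "finite U \<Longrightarrow> degree (eta U) = card U"
  using degree_lead_coeff_eta by blast

lemma eta_nonzero: "finite U \<Longrightarrow> eta U \<noteq> 0"
  using degree_lead_coeff_eta[of U] by auto

section \<open>Real-rootedness\<close>

lemma poly_complex_eta_remove_vertex:
  assumes "finite U" "u \<in> U"
  shows "poly (complex_poly (eta U)) z = (z - of_real (w1 u)) * poly (complex_poly (eta (U - {u}))) z
    - (\<Sum>v\<in>neighbours U u. of_real (edge_weight u v) * poly (complex_poly (eta (U - {u} - {v}))) z)"
  unfolding eta_remove_vertex[OF assms]
  by (simp add: complex_poly_add complex_poly_diff complex_poly_mult complex_poly_sum map_poly_smult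
      map_poly_pCons poly_sum algebra_simps)

lemma eta_upper_half_plane:
  assumes "finite U" "Im z > 0"
  shows "poly (complex_poly (eta U)) z \<noteq> 0
    \<and> (\<forall>u\<in>U. Im (poly (complex_poly (eta U)) z / poly (complex_poly (eta (U - {u}))) z) > 0)"
  using assms(1)
proof (induction "card U" arbitrary: U rule: less_induct)
  case less
  define ev where "ev V = poly (complex_poly (eta V)) z" for V
  have quotient: "ev U \<noteq> 0 \<and> Im (ev U / ev (U - {u})) > 0" if u: "u \<in> U" for u
  proof -
    have "card (U - {u}) < card U"
      using less.prems u by (rule card_Diff1_less)
    then have IH: "ev (U - {u}) \<noteq> 0" "\<forall>v\<in>U - {u}. Im (ev (U - {u}) / ev (U - {u} - {v})) > 0"
      using less.hyps less.prems by (simp_all add: ev_def)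
    have "ev U = (z - of_real (w1 u)) * ev (U - {u})
        - (\<Sum>v\<in>neighbours U u. of_real (edge_weight u v) * ev (U - {u} - {v}))"
      unfolding ev_def by (rule poly_complex_eta_remove_vertex[OF less.prems u])
    then have "Im (ev U / ev (U - {u})) = Im z
        - (\<Sum>v\<in>neighbours U u. edge_weight u v * Im (ev (U - {u} - {v}) / ev (U - {u})))"
      using IH(1) by (simp add: diff_divide_distrib sum_divide_distrib Im_sum
          times_divide_eq_right[symmetric] del: times_divide_eq_right)
    moreover have "Im (ev (U - {u} - {v}) / ev (U - {u})) < 0" if "v \<in> neighbours U u" for v
      using Im_inverse_neg[of "ev (U - {u}) / ev (U - {u} - {v})"] IH(2) that
      by (simp add: neighbours_def inverse_divide)
    then have "(\<Sum>v\<in>neighbours U u. edge_weight u v * Im (ev (U - {u} - {v}) / ev (U - {u}))) \<le> 0"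
      by (intro sum_nonpos mult_nonneg_nonpos edge_weight_nonneg) (auto intro: less_imp_le)
    ultimately have "Im (ev U / ev (U - {u})) > 0"
      using assms(2) by linarith
    then show ?thesis
      by auto
  qed
  show ?case
  proof (cases "U = {}")
    case True
    then show ?thesis
      by (simp add: eta_empty)
  next
    case False
    then show ?thesis
      using quotient by (auto simp: ev_def)
  qed
qed

lemma eta_real_roots:
  assumes "finite U" "poly (complex_poly (eta U)) z = 0"
  shows "Im z = 0"
proof (rule ccontr)
  assume "Im z \<noteq> 0"
  then consider "Im z > 0" | "Im (cnj z) > 0"
    by fastforce
  then show False
  proof cases
    case 1
    then show False
      using eta_upper_half_plane[OF assms(1)] assms(2) by blast
  next
    case 2
    have "map_poly cnj (complex_poly (eta U)) = complex_poly (eta U)"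
      by (simp add: map_poly_map_poly comp_def)
    then have "poly (complex_poly (eta U)) (cnj z) = 0"
      using assms(2) by (metis complex_cnj_zero poly_map_poly_cnj complex_cnj_cnj)
    then show False
      using eta_upper_half_plane[OF assms(1) 2] by blast
  qed
qed

section \<open>The Wronskian along a path\<close>

definition wronskian :: "'a \<Rightarrow> 'a set \<Rightarrow> real poly" where
  "wronskian u U = eta (U - {u}) * pderiv (eta U) - eta U * pderiv (eta (U - {u}))"

lemma wronskian_remove_vertex:
  assumes "finite U" "u \<in> U"
  shows "wronskian u U = (eta (U - {u}))\<^sup>2
           + (\<Sum>v\<in>neighbours U u. smult (edge_weight u v) (wronskian v (U - {u})))"
proof -
  define L where "L = [:- w1 u, 1:]"
  define P where "P = eta (U - {u})"
  define Q where "Q v = eta (U - {u} - {v})" for v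
  define B where "B = (\<Sum>v\<in>neighbours U u. smult (edge_weight u v) (Q v))"
  have eta_U: "eta U = L * P - B"
    unfolding L_def P_def Q_def B_def by (rule eta_remove_vertex[OF assms])
  have pderiv_eta_U: "pderiv (eta U)
      = P + L * pderiv P - (\<Sum>v\<in>neighbours U u. smult (edge_weight u v) (pderiv (Q v)))"
    unfolding eta_U B_def by (simp add: pderiv_mult pderiv_diff pderiv_sum pderiv_smult L_def pderiv_pCons)
  have "wronskian u U = P\<^sup>2 + (B * pderiv P
      - P * (\<Sum>v\<in>neighbours U u. smult (edge_weight u v) (pderiv (Q v))))"
    unfolding wronskian_def P_def[symmetric] pderiv_eta_U unfolding eta_U
    by (simp add: algebra_simps power2_eq_square)
  also have "B * pderiv P - P * (\<Sum>v\<in>neighbours U u. smult (edge_weight u v) (pderiv (Q v)))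
      = (\<Sum>v\<in>neighbours U u. smult (edge_weight u v) (wronskian v (U - {u})))"
    by (simp add: B_def Q_def P_def wronskian_def sum_distrib_left sum_distrib_right
        smult_diff_right sum_subtractf algebra_simps)
  finally show ?thesis
    by (simp add: P_def)
qed

lemma poly_wronskian_remove_vertex:
  assumes "finite U" "u \<in> U"
  shows "poly (wronskian u U) x = (poly (eta (U - {u})) x)\<^sup>2
           + (\<Sum>v\<in>neighbours U u. edge_weight u v * poly (wronskian v (U - {u})) x)"
  by (simp add: wronskian_remove_vertex[OF assms] poly_sum)

lemma poly_wronskian_nonneg: "finite U \<Longrightarrow> u \<in> U \<Longrightarrow> poly (wronskian u U) x \<ge> 0"
proof (induction "card U" arbitrary: U u rule: less_induct)
  case less
  have "card (U - {u}) < card U"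
    using less.prems by (rule card_Diff1_less)
  then have "poly (wronskian v (U - {u})) x \<ge> 0" if "v \<in> neighbours U u" for v
    using less.prems that by (intro less.hyps) (auto simp: neighbours_def)
  then show ?case
    unfolding poly_wronskian_remove_vertex[OF less.prems]
    by (intro add_nonneg_nonneg sum_nonneg mult_nonneg_nonneg edge_weight_nonneg) auto
qed

fun path_weight :: "'a list \<Rightarrow> real" where
  "path_weight [] = 1"
| "path_weight [u] = 1"
| "path_weight (u # v # p) = edge_weight u v * path_weight (v # p)"

lemma poly_wronskian_ge_path:
  "finite U \<Longrightarrow> is_path U E p \<Longrightarrow>
     path_weight p * (poly (eta (U - set p)) x)\<^sup>2 \<le> poly (wronskian (hd p) U) x"
proof (induction p arbitrary: U rule: path_weight.induct)
  case 1
  then show ?case by (simp add: is_path_def)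
next
  case (2 u)
  then have "u \<in> U"
    by (simp add: is_path_def)
  moreover have "poly (wronskian v (U - {u})) x \<ge> 0" if "v \<in> neighbours U u" for v
    using 2 that by (intro poly_wronskian_nonneg) (auto simp: neighbours_def)
  ultimately show ?case
    using 2 by (auto simp: poly_wronskian_remove_vertex intro!: sum_nonneg mult_nonneg_nonneg edge_weight_nonneg)
next
  case (3 u v p)
  have path: "u \<in> U" "u \<notin> set (v # p)" "{u,v} \<in> E" "is_path (U - {u}) E (v # p)"
    using "3.prems"(2) unfolding is_path_Cons_Cons by blast+
  then have v: "v \<in> neighbours U u"
    by (auto simp: neighbours_def is_path_def)
  have "U - {u} - set (v # p) = U - set (u # v # p)"
    by auto
  then have "path_weight (u # v # p) * (poly (eta (U - set (u # v # p))) x)\<^sup>2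
      \<le> edge_weight u v * poly (wronskian v (U - {u})) x"
    using "3.IH"[of "U - {u}"] "3.prems"(1) path(4)
    by (simp add: mult.assoc mult_left_mono edge_weight_nonneg)
  also have "\<dots> \<le> (\<Sum>v\<in>neighbours U u. edge_weight u v * poly (wronskian v (U - {u})) x)"
    using "3.prems"(1) v
    by (intro member_le_sum mult_nonneg_nonneg edge_weight_nonneg poly_wronskian_nonneg)
      (auto simp: finite_neighbours neighbours_def)
  also have "\<dots> \<le> poly (wronskian (hd (u # v # p)) U) x"
    using "3.prems"(1) path(1) by (simp add: poly_wronskian_remove_vertex)
  finally show ?case .
qed

end

locale nonzero_graph_weights = graph_weights +
  assumes weight_nonzero: "\<forall>e\<in>E. w e \<noteq> 0"
begin

lemma path_weight_pos: "is_path U E p \<Longrightarrow> path_weight p > 0"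
proof (induction p arbitrary: U rule: path_weight.induct)
  case (3 u v p)
  then show ?case
    using weight_nonzero by (auto simp: is_path_Cons_Cons edge_weight_def)
qed simp_all

lemma order_eta_le_Suc_order_eta_remove_path:
  assumes "finite U" "is_path U E p"
  shows "order t (eta U) \<le> Suc (order t (eta (U - set p)))"
proof -
  let ?u = "hd p"
  have u: "?u \<in> U"
    using assms(2) by (cases p) (auto simp: is_path_def)
  have "is_path U E [?u]"
    using u by (simp add: is_path_def)
  then have bound: "1 * (poly (eta (U - {?u})) x)\<^sup>2 \<le> poly (wronskian ?u U) x" for x
    using poly_wronskian_ge_path[OF assms(1)] by fastforce
  have nonzero: "eta (U - {?u}) \<noteq> 0"
    using assms(1) by (simp add: eta_nonzero)
  have W_nonzero: "wronskian ?u U \<noteq> 0"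
    using poly_nonzero_if_square_bound[OF zero_less_one nonzero bound] .
  have W_vertex: "order t (wronskian ?u U) \<le> 2 * order t (eta (U - {?u}))"
    using order_le_double_order_if_square_bound[OF zero_less_one nonzero bound] .
  have W_path: "order t (wronskian ?u U) \<le> 2 * order t (eta (U - set p))"
    using order_le_double_order_if_square_bound[OF path_weight_pos[OF assms(2)] eta_nonzero
        poly_wronskian_ge_path[OF assms]] assms(1) by simp
  have "order t (eta U) + order t (eta (U - {?u})) - 1 \<le> order t (wronskian ?u U)"
    using root_power_dvd_wronskian[of t "eta U" "eta (U - {?u})"] W_nonzero
    by (simp add: wronskian_def order_divides)
  with W_vertex W_path show ?thesis
    by linarith
qed

lemma order_eta_le_card_path_cover:
  assumes "path_cover U E P"
  shows "order t (eta U) \<le> card P"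
proof -
  have "finite P"
    using assms by (simp add: path_cover_def)
  then show ?thesis
    using assms
  proof (induction P arbitrary: U rule: finite_induct)
    case empty
    then show ?case
      by (simp add: path_cover_def eta_empty)
  next
    case (insert p P)
    have cover: "U = set p \<union> (\<Union>q\<in>P. set q)" "\<forall>q\<in>P. set p \<inter> set q = {}"
      using insert.prems insert.hyps(2) by (auto simp: path_cover_def)
    then have "path_cover (U - set p) E P"
      using insert.prems insert.hyps(1)
      by (auto simp: path_cover_def intro: is_path_mono)
    then have "order t (eta (U - set p)) \<le> card P"
      by (rule insert.IH)
    moreover have "order t (eta U) \<le> Suc (order t (eta (U - set p)))"
      using insert.prems insert.hyps(1) cover(1)
      by (intro order_eta_le_Suc_order_eta_remove_path) (auto simp: path_cover_def)
    ultimately show ?case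
      using insert.hyps by simp
  qed
qed

lemma length_path_le_card_roots:
  assumes "finite U" "is_path U E p"
  shows "length p \<le> card {x. poly (eta U) x = 0}"
proof -
  let ?Z = "{x. poly (eta U) x = 0}"
  have fin: "finite (U - set p)" "finite ?Z"
    using assms(1) by (simp_all add: poly_roots_finite eta_nonzero)
  have len: "length p = card (set p)" "set p \<subseteq> U"
    using assms(2) by (simp_all add: is_path_def distinct_card)
  have "card U = (\<Sum>x\<in>?Z. order x (eta U))"
    using degree_eq_sum_order_if_real_roots[OF eta_nonzero eta_real_roots] assms(1)
    by (simp add: degree_eta)
  also have "\<dots> \<le> (\<Sum>x\<in>?Z. Suc (order x (eta (U - set p))))"
    by (intro sum_mono order_eta_le_Suc_order_eta_remove_path assms)
  also have "\<dots> = (\<Sum>x\<in>?Z. order x (eta (U - set p))) + card ?Z"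
    by (simp add: sum_Suc)
  also have "(\<Sum>x\<in>?Z. order x (eta (U - set p))) \<le> card (U - set p)"
    using sum_order_le_degree[OF fin(2) eta_nonzero[OF fin(1)]] by (simp add: degree_eta fin(1))
  also have "card (U - set p) = card U - length p"
    using len assms(1) by (simp add: card_Diff_subset finite_subset)
  finally show ?thesis
    using card_mono[OF assms(1) len(2)] len(1) by linarith
qed

end

theorem corollary4p7:
  fixes V :: "'a set" and E :: "'a set set"
    and w :: "'a set \<Rightarrow> complex" and w1 :: "'a \<Rightarrow> real"
  assumes "simple_graph V E"
    and "\<forall>e\<in>E. w e \<noteq> 0"
  shows "(\<forall>P a. path_cover V E P \<longrightarrow> order a (eta_w V E w w1) \<le> card P)
       \<and> (\<forall>p. is_path V E p \<longrightarrow> length p \<le> card {x. poly (eta_w V E w w1) x = 0})"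
proof -
  interpret nonzero_graph_weights E w w1
    using assms by unfold_locales (auto simp: simple_graph_def)
  have "finite V"
    using assms(1) by (simp add: simple_graph_def)
  then show ?thesis
    using order_eta_le_card_path_cover length_path_le_card_roots by blast
qed

end
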